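(* Let $p$ be an odd prime and let $A$ be a $p\times p$ symmetric circulant matrix with entries in $\mathbb{Z}_p$. Then the nullity of $A$ over $\mathbb{Z}_p$ (i.e. $p-\operatorname{rank}_{\mathbb{Z}_p}A$) is not equal to $1$.
   Context: A $k\times k$ matrix $(a_{ij})$ is circulant if $a_{ij}=a_{i+1,j+1}$ for all $i,j$ (indices mod $k$). *)

theory Defs
  imports "Berlekamp_Zassenhaus.Finite_Field" "Jordan_Normal_Form.DL_Rank"
begin

definition circulant_mat :: "nat \<Rightarrow> 'a mat \<Rightarrow> bool" where
  "circulant_mat k A \<longleftrightarrow> A \<in> carrier_mat k k \<and>
     (\<forall>i<k. \<forall>j<k. A $$ (i, j) = A $$ ((i + 1) mod k, (j + 1) mod k))"

end

theory Submission
  imports Defs "Jordan_Normal_Form.Matrix_Kernel"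
begin

text \<open>Let \<open>R\<close> be the cyclic shift of coordinates. It commutes with a circulant \<open>A\<close>, so it
  maps the kernel \<open>K\<close> of \<open>A\<close> into itself. If \<open>dim K = 1\<close>, then \<open>R\<close> acts on \<open>K\<close> as a scalar \<open>c\<close>
  with \<open>c\<^sup>p = 1\<close>, hence \<open>c = 1\<close> in characteristic \<open>p\<close>: every vector of \<open>K\<close> is constant, and
  the all-ones vector lies in \<open>K\<close>. For the ramp \<open>w = (0, 1, \<dots>, p - 1)\<close> we have \<open>R w = w + 1\<close>,
  so \<open>A w\<close> is shift-invariant, i.e. constant; symmetry of \<open>A\<close> gives \<open>(A w)\<^sub>0 = -(A w)\<^sub>0\<close>, and
  as \<open>p\<close> is odd, \<open>A w = 0\<close>. But then \<open>w \<in> K\<close> would be constant.\<close>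

lemma rank_plus_kernel_dim:
  fixes A :: "'a::field mat"
  assumes A: "A \<in> carrier_mat n n"
  shows "vec_space.rank n A + kernel_dim A = n"
proof -
  interpret vec_space "TYPE('a)" n .
  interpret K: kernel n n A by (unfold_locales, rule A)
  have "linear_map class_ring V V (\<lambda>v. A *\<^sub>v v)"
    using A vec_vs
    by (auto simp: linear_map_def mod_hom_def mod_hom_axioms_def module_hom_def
        vectorspace_def mult_add_distrib_mat_vec mult_mat_vec module_vec_simps class_ring_simps)
  then interpret L: linear_map class_ring V V "\<lambda>v. A *\<^sub>v v" .
  have im: "L.im = span (set (cols A))"
    using col_space_eq[OF A] A unfolding L.im_def col_space_def by (auto simp: module_vec_simps)
  have ker: "L.ker = mat_kernel A"
    using A unfolding L.ker_def mat_kernel_def by (auto simp: module_vec_simps)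
  from L.rank_nullity[OF fin_dim] show ?thesis
    unfolding im ker rank_def dim_is_n K.kernel_dim by simp
qed

lemma kernel_dim_1_generator:
  fixes A :: "'a::field mat"
  assumes A: "A \<in> carrier_mat nr nc" and dim1: "kernel_dim A = 1"
  obtains b where "b \<in> mat_kernel A" "b \<noteq> 0\<^sub>v nc"
    "\<And>x. x \<in> mat_kernel A \<Longrightarrow> \<exists>c. x = c \<cdot>\<^sub>v b"
proof -
  interpret K: kernel nr nc A by (unfold_locales, rule A)
  obtain B where finB: "finite B" and basB: "K.basis B" using kernel_basis_exists[OF A] by blast
  have "card B = 1" using K.Ker.dim_basis[OF finB basB] dim1 by simp
  then obtain b where B: "B = {b}" using card_1_singletonE by blast
  have b: "b \<in> mat_kernel A" using basB B unfolding K.Ker.basis_def by auto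
  have bc: "b \<in> carrier_vec nc" using mat_kernelD[OF A b] by simp
  have "b \<noteq> 0\<^sub>v nc"
    using K.Ker.vs_zero_lin_dep[of B] basB B unfolding K.Ker.basis_def by auto
  moreover have "\<exists>c. x = c \<cdot>\<^sub>v b" if x: "x \<in> mat_kernel A" for x
  proof -
    have "x \<in> K.Ker.span {b}" using basB B x unfolding K.Ker.basis_def by auto
    then obtain a where "K.Ker.lincomb a {b} = x"
      using K.Ker.finite_in_span[of "{b}" x] b by auto
    then have "x $ i = (a b \<cdot>\<^sub>v b) $ i" if "i < nc" for i
      using K.lincomb_index[OF that, of "{b}" a] b bc that by auto
    then show ?thesis using mat_kernelD(1)[OF A x] bc by (intro exI eq_vecI) auto
  qed
  ultimately show ?thesis using that b by blast
qed

lemma sum_mod_shift: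
  fixes h :: "nat \<Rightarrow> 'a::comm_monoid_add"
  assumes "0 < n"
  shows "(\<Sum>j\<in>{0..<n}. h ((j + 1) mod n)) = (\<Sum>j\<in>{0..<n}. h j)"
proof (rule sum.reindex_bij_witness[where i = "\<lambda>j. (j + n - 1) mod n" and j = "\<lambda>j. (j + 1) mod n"])
  fix a assume a: "a \<in> {0..<n}"
  then show "(a + 1) mod n \<in> {0..<n}" using assms by auto
  show "((a + 1) mod n + n - 1) mod n = a" using a assms by (cases "a + 1 = n") auto
next
  fix b assume b: "b \<in> {0..<n}"
  then show "(b + n - 1) mod n \<in> {0..<n}" using assms by auto
  show "((b + n - 1) mod n + 1) mod n = b" using b assms by (cases "b = 0") (auto simp: mod_Suc_eq)
qed simp

lemma sum_mod_reflect:
  fixes h :: "nat \<Rightarrow> 'a::comm_monoid_add"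
  shows "(\<Sum>j\<in>{0..<n}. h ((n - j) mod n)) = (\<Sum>j\<in>{0..<n}. h j)"
proof -
  have inv: "(n - (n - a) mod n) mod n = a" if "a < n" for a
    using that by (cases "a = 0") auto
  show ?thesis
    by (rule sum.reindex_bij_witness[where i = "\<lambda>j. (n - j) mod n" and j = "\<lambda>j. (n - j) mod n"])
      (auto simp: inv)
qed

lemma circulant_mat_carrier: "circulant_mat n A \<Longrightarrow> A \<in> carrier_mat n n"
  unfolding circulant_mat_def by blast

lemma circulant_mat_entry_shift:
  assumes A: "circulant_mat n A" and "i < n" "j < n"
  shows "A $$ ((i + k) mod n, (j + k) mod n) = A $$ (i, j)"
proof (induction k)
  case (Suc k)
  have "A $$ ((i + Suc k) mod n, (j + Suc k) mod n) =
        A $$ (((i + k) mod n + 1) mod n, ((j + k) mod n + 1) mod n)"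
    by (simp add: mod_Suc_eq)
  also have "\<dots> = A $$ ((i + k) mod n, (j + k) mod n)"
    using A \<open>i < n\<close> unfolding circulant_mat_def by (metis mod_less_divisor zero_less_iff_neq_zero
        less_nat_zero_code)
  finally show ?case using Suc by simp
qed (use assms in simp)

lemma symmetric_circulant_first_row_reflect:
  assumes A: "circulant_mat n A" and sym: "transpose_mat A = A" and j: "j < n"
  shows "A $$ (0, j) = A $$ (0, (n - j) mod n)"
proof -
  have "A $$ (0, j) = A $$ (j, 0)"
    using circulant_mat_carrier[OF A] j by (metis sym index_transpose_mat(1) carrier_matD gr_implies_not0
        neq0_conv)
  also have "\<dots> = A $$ ((j + (n - j)) mod n, (0 + (n - j)) mod n)"
    using circulant_mat_entry_shift[OF A j, of 0 "n - j"] j by simp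
  finally show ?thesis using j by simp
qed

definition rotate_vec :: "'a vec \<Rightarrow> 'a vec" where
  "rotate_vec v = vec (dim_vec v) (\<lambda>i. v $ ((i + 1) mod dim_vec v))"

lemma dim_rotate_vec [simp]: "dim_vec (rotate_vec v) = dim_vec v"
  and index_rotate_vec [simp]: "i < dim_vec v \<Longrightarrow> rotate_vec v $ i = v $ ((i + 1) mod dim_vec v)"
  and rotate_vec_carrier [simp]: "rotate_vec v \<in> carrier_vec n \<longleftrightarrow> v \<in> carrier_vec n"
  unfolding rotate_vec_def carrier_vec_def by auto

lemma rotate_vec_smult [simp]: "rotate_vec (c \<cdot>\<^sub>v v) = c \<cdot>\<^sub>v rotate_vec v"
  by (intro eq_vecI) (auto simp: rotate_vec_def)

lemma circulant_mult_rotate_vec: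
  fixes A :: "'a::comm_semiring_0 mat"
  assumes A: "circulant_mat n A" and v: "v \<in> carrier_vec n"
  shows "A *\<^sub>v rotate_vec v = rotate_vec (A *\<^sub>v v)"
proof (rule eq_vecI)
  have Ac: "A \<in> carrier_mat n n" using circulant_mat_carrier[OF A] .
  fix i assume "i < dim_vec (rotate_vec (A *\<^sub>v v))"
  then have i: "i < n" using Ac by simp
  have "(A *\<^sub>v rotate_vec v) $ i = (\<Sum>j\<in>{0..<n}. A $$ (i, j) * v $ ((j + 1) mod n))"
    using Ac v i by (simp add: scalar_prod_def)
  also have "\<dots> = (\<Sum>j\<in>{0..<n}. A $$ ((i + 1) mod n, (j + 1) mod n) * v $ ((j + 1) mod n))"
    using circulant_mat_entry_shift[OF A i, of _ 1] by (intro sum.cong) auto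
  also have "\<dots> = (\<Sum>j\<in>{0..<n}. A $$ ((i + 1) mod n, j) * v $ j)"
    using i by (intro sum_mod_shift) simp
  also have "\<dots> = rotate_vec (A *\<^sub>v v) $ i"
    using Ac v i by (simp add: scalar_prod_def)
  finally show "(A *\<^sub>v rotate_vec v) $ i = rotate_vec (A *\<^sub>v v) $ i" .
qed (use assms circulant_mat_carrier in auto)

lemma rotate_vec_mat_kernel:
  fixes A :: "'a::comm_ring_1 mat"
  assumes A: "circulant_mat n A" and v: "v \<in> mat_kernel A"
  shows "rotate_vec v \<in> mat_kernel A"
proof -
  have Ac: "A \<in> carrier_mat n n" using circulant_mat_carrier[OF A] .
  have vc: "v \<in> carrier_vec n" and "A *\<^sub>v v = 0\<^sub>v n" using mat_kernelD[OF Ac v] by auto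
  then have "A *\<^sub>v rotate_vec v = 0\<^sub>v n"
    unfolding circulant_mult_rotate_vec[OF A vc] by (auto simp: rotate_vec_def)
  then show ?thesis using vc by (intro mat_kernelI[OF Ac]) auto
qed

lemma rotate_vec_eigenvector_index:
  fixes v :: "'a::comm_semiring_1 vec"
  assumes eig: "rotate_vec v = c \<cdot>\<^sub>v v" and i: "i < dim_vec v"
  shows "v $ i = c ^ i * v $ 0"
  using i
proof (induction i)
  case (Suc i)
  have "v $ Suc i = rotate_vec v $ i" using Suc.prems by simp
  also have "\<dots> = c * v $ i" using Suc.prems by (simp add: eig)
  finally show ?case using Suc by (simp add: mult.assoc)
qed simp

lemma rotate_vec_eigenvalue_power_dim:
  fixes v :: "'a::idom vec"
  assumes eig: "rotate_vec v = c \<cdot>\<^sub>v v" and v: "v \<noteq> 0\<^sub>v (dim_vec v)"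
  shows "c ^ dim_vec v = 1"
proof -
  let ?n = "dim_vec v"
  have v0: "v $ 0 \<noteq> 0"
  proof
    assume "v $ 0 = 0"
    then have "v $ i = 0" if "i < ?n" for i using rotate_vec_eigenvector_index[OF eig that] by simp
    then have "v = 0\<^sub>v ?n" by (intro eq_vecI) auto
    with v show False ..
  qed
  then have n: "0 < ?n" using v by (metis eq_vecI index_zero_vec(2) not_less_zero neq0_conv)
  have "v $ 0 = rotate_vec v $ (?n - 1)" using n by simp
  also have "\<dots> = c * v $ (?n - 1)" using n by (simp add: eig)
  also have "\<dots> = c * (c ^ (?n - 1) * v $ 0)"
    using rotate_vec_eigenvector_index[OF eig, of "?n - 1"] n by simp
  also have "\<dots> = c ^ ?n * v $ 0" using n by (cases ?n) (simp_all add: mult.assoc)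
  finally show ?thesis using v0 by simp
qed

lemma rotate_vec_fixed_index:
  fixes v :: "'a::comm_semiring_1 vec"
  assumes "rotate_vec v = v" and "i < dim_vec v"
  shows "v $ i = v $ 0"
  using rotate_vec_eigenvector_index[of v 1 i] assms by simp

lemma power_CHAR_eq_1_imp_eq_1:
  fixes x :: "'a::field_prime_char"
  assumes "x ^ CHAR('a) = 1"
  shows "x = 1"
proof -
  have "(x - 1) ^ CHAR('a) = x ^ CHAR('a) + (- 1) ^ CHAR('a)"
    using freshmans_dream[where x = x and y = "- 1"] by simp
  also have "\<dots> = 0" using assms minus_power_prime_CHAR[where 'a = 'a and x = 1] by simp
  finally show ?thesis by simp
qed

lemma rotate_vec_ramp:
  "rotate_vec (vec CHAR('a) of_nat) = vec CHAR('a) of_nat + vec CHAR('a) (\<lambda>_. 1 :: 'a::semiring_1)"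
proof (rule eq_vecI)
  fix i assume "i < dim_vec (vec CHAR('a) of_nat + vec CHAR('a) (\<lambda>_. 1 :: 'a))"
  then show "rotate_vec (vec CHAR('a) of_nat) $ i = (vec CHAR('a) of_nat + vec CHAR('a) (\<lambda>_. 1 :: 'a)) $ i"
    using of_nat_mod_CHAR[where 'a = 'a, of "Suc i"] by (simp add: add.commute)
qed simp

lemma symmetric_circulant_mult_ramp_first:
  fixes A :: "'a::comm_ring_1 mat"
  assumes A: "circulant_mat CHAR('a) A" and sym: "transpose_mat A = A" and n: "0 < CHAR('a)"
  defines "w \<equiv> vec CHAR('a) of_nat"
  shows "(A *\<^sub>v w) $ 0 = - (A *\<^sub>v w) $ 0"
proof -
  let ?n = "CHAR('a)"
  have Ac: "A \<in> carrier_mat ?n ?n" using circulant_mat_carrier[OF A] .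
  have Aw: "(A *\<^sub>v w) $ 0 = (\<Sum>j\<in>{0..<?n}. A $$ (0, j) * of_nat j)"
    using Ac n by (simp add: w_def scalar_prod_def)
  also have "\<dots> = (\<Sum>j\<in>{0..<?n}. A $$ (0, (?n - j) mod ?n) * of_nat j)"
  proof (rule sum.cong[OF refl])
    fix j assume "j \<in> {0..<?n}"
    then show "A $$ (0, j) * of_nat j = A $$ (0, (?n - j) mod ?n) * of_nat j"
      using symmetric_circulant_first_row_reflect[OF A sym, of j] by simp
  qed
  also have "\<dots> = (\<Sum>j\<in>{0..<?n}. A $$ (0, (?n - (?n - j) mod ?n) mod ?n) * of_nat ((?n - j) mod ?n))"
    by (rule sum_mod_reflect[symmetric])
  also have "\<dots> = (\<Sum>j\<in>{0..<?n}. - (A $$ (0, j) * of_nat j))"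
  proof (intro sum.cong refl)
    fix j assume "j \<in> {0..<?n}"
    then have "(?n - (?n - j) mod ?n) mod ?n = j" and "of_nat ((?n - j) mod ?n) = (- of_nat j :: 'a)"
      by (cases "j = 0"; simp)+
    then show "A $$ (0, (?n - (?n - j) mod ?n) mod ?n) * of_nat ((?n - j) mod ?n) = - (A $$ (0, j) * of_nat j)"
      by simp
  qed
  finally show ?thesis by (simp add: Aw sum_negf)
qed

lemma circulant_kernel_dim_1_rotate_vec_fixed:
  fixes A :: "'a::field_prime_char mat"
  assumes A: "circulant_mat CHAR('a) A" and dim1: "kernel_dim A = 1" and x: "x \<in> mat_kernel A"
  shows "rotate_vec x = x"
proof -
  have Ac: "A \<in> carrier_mat CHAR('a) CHAR('a)" using circulant_mat_carrier[OF A] .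
  obtain b where b: "b \<in> mat_kernel A" "b \<noteq> 0\<^sub>v CHAR('a)"
    and gen: "\<And>x. x \<in> mat_kernel A \<Longrightarrow> \<exists>c. x = c \<cdot>\<^sub>v b"
    using kernel_dim_1_generator[OF Ac dim1] by blast
  have bc: "b \<in> carrier_vec CHAR('a)" using mat_kernelD(1)[OF Ac b(1)] .
  obtain c where eig: "rotate_vec b = c \<cdot>\<^sub>v b"
    using gen[OF rotate_vec_mat_kernel[OF A b(1)]] by blast
  have "c ^ CHAR('a) = 1"
    using rotate_vec_eigenvalue_power_dim[OF eig] b(2) bc by simp
  then have "c = 1" by (rule power_CHAR_eq_1_imp_eq_1)
  then have "rotate_vec b = b" using eig by simp
  moreover obtain d where "x = d \<cdot>\<^sub>v b" using gen[OF x] by blast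
  ultimately show ?thesis by simp
qed

lemma circulant_kernel_dim_1_const_in_kernel:
  fixes A :: "'a::field_prime_char mat"
  assumes A: "circulant_mat CHAR('a) A" and dim1: "kernel_dim A = 1"
  shows "vec CHAR('a) (\<lambda>_. 1) \<in> mat_kernel A"
proof -
  have Ac: "A \<in> carrier_mat CHAR('a) CHAR('a)" using circulant_mat_carrier[OF A] .
  obtain b where b: "b \<in> mat_kernel A" "b \<noteq> 0\<^sub>v CHAR('a)"
    using kernel_dim_1_generator[OF Ac dim1] by blast
  have bc: "b \<in> carrier_vec CHAR('a)" using mat_kernelD(1)[OF Ac b(1)] .
  have b_const: "b $ i = b $ 0" if "i < CHAR('a)" for i
    using rotate_vec_fixed_index[OF circulant_kernel_dim_1_rotate_vec_fixed[OF A dim1 b(1)], of i]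
      that bc by simp
  have b0: "b $ 0 \<noteq> 0"
  proof
    assume b0: "b $ 0 = 0"
    have "b = 0\<^sub>v CHAR('a)"
    proof (rule eq_vecI)
      fix i assume "i < dim_vec (0\<^sub>v CHAR('a) :: 'a vec)"
      then show "b $ i = 0\<^sub>v CHAR('a) $ i" using b_const[of i] b0 by simp
    qed (use bc in simp)
    with b(2) show False ..
  qed
  have "vec CHAR('a) (\<lambda>_. 1) = inverse (b $ 0) \<cdot>\<^sub>v b"
  proof (rule eq_vecI)
    fix i assume "i < dim_vec (inverse (b $ 0) \<cdot>\<^sub>v b)"
    then show "vec CHAR('a) (\<lambda>_. 1) $ i = (inverse (b $ 0) \<cdot>\<^sub>v b) $ i"
      using b_const[of i] b0 bc by simp
  qed (use bc in simp)
  then show ?thesis using mat_kernel_smult[OF Ac b(1)] by simp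
qed

lemma symmetric_circulant_ramp_in_kernel:
  fixes A :: "'a::idom mat"
  assumes odd: "odd CHAR('a)" and A: "circulant_mat CHAR('a) A" and sym: "transpose_mat A = A"
    and const: "vec CHAR('a) (\<lambda>_. 1) \<in> mat_kernel A"
  shows "vec CHAR('a) of_nat \<in> mat_kernel A"
proof -
  let ?n = "CHAR('a)" and ?w = "vec CHAR('a) of_nat :: 'a vec"
  have n: "0 < ?n" using odd by (intro gr0I) simp
  have Ac: "A \<in> carrier_mat ?n ?n" using circulant_mat_carrier[OF A] .
  have "A *\<^sub>v vec ?n (\<lambda>_. 1) = 0\<^sub>v ?n" using mat_kernelD(2)[OF Ac const] .
  then have "A *\<^sub>v rotate_vec ?w = A *\<^sub>v ?w"
    using Ac by (simp add: rotate_vec_ramp mult_add_distrib_mat_vec[OF Ac])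
  then have "rotate_vec (A *\<^sub>v ?w) = A *\<^sub>v ?w"
    using circulant_mult_rotate_vec[OF A] by simp
  note Aw_fixed = rotate_vec_fixed_index[OF this]
  have "\<not> CHAR('a) dvd 2"
  proof
    assume "CHAR('a) dvd 2"
    then have "CHAR('a) \<le> 2" by (rule dvd_imp_le) simp
    with odd CHAR_not_1'[where 'a = 'a] show False by presburger
  qed
  then have "of_nat 2 \<noteq> (0 :: 'a)" by (simp only: of_nat_eq_0_iff_char_dvd) simp
  then have Aw0: "(A *\<^sub>v ?w) $ 0 = 0"
    using symmetric_circulant_mult_ramp_first[OF A sym n]
    by (simp add: eq_neg_iff_add_eq_0 mult_2[symmetric])
  have "(A *\<^sub>v ?w) $ i = 0" if "i < ?n" for i
    using Aw_fixed[of i] Aw0 that Ac by (simp del: index_mult_mat_vec)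
  then have "A *\<^sub>v ?w = 0\<^sub>v ?n" using Ac by (intro eq_vecI) auto
  then show ?thesis using Ac by (intro mat_kernelI[OF Ac]) auto
qed

theorem symmetric_circulant_kernel_dim_neq_1:
  fixes A :: "'a::field_prime_char mat"
  assumes "odd CHAR('a)" and A: "circulant_mat CHAR('a) A" and "transpose_mat A = A"
  shows "kernel_dim A \<noteq> 1"
proof
  assume dim1: "kernel_dim A = 1"
  have "vec CHAR('a) of_nat \<in> mat_kernel A"
    using symmetric_circulant_ramp_in_kernel assms circulant_kernel_dim_1_const_in_kernel[OF A dim1]
    by blast
  then have "rotate_vec (vec CHAR('a) of_nat) = (vec CHAR('a) of_nat :: 'a vec)"
    using circulant_kernel_dim_1_rotate_vec_fixed[OF A dim1] by blast
  then have "rotate_vec (vec CHAR('a) of_nat) $ 0 = (vec CHAR('a) of_nat :: 'a vec) $ 0" by simp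
  then show False by (simp add: rotate_vec_ramp)
qed

theorem lemma2p7:
  fixes A :: "'p::prime_card mod_ring mat"
  assumes "p = CARD('p)"
    and "odd p"
    and "circulant_mat p A"
    and "transpose_mat A = A"
  shows "p - vec_space.rank p A \<noteq> 1"
proof -
  have char: "CHAR('p mod_ring) = p" using assms(1) by simp
  have "kernel_dim A \<noteq> 1"
    using symmetric_circulant_kernel_dim_neq_1[of A] assms(2-4) unfolding char by blast
  then show ?thesis
    using rank_plus_kernel_dim[OF circulant_mat_carrier[OF assms(3)]] by linarith
qed

end
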